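(* In the setting below, suppose $p,q\geq5$. Then for all distinct $i,j,k\in\mathbb Z/N\mathbb Z$ we have $P_{ij}\subset P^+_{jk}$ and $Q_{ij}\subset Q^+_{jk}$.
   Context: Setting: $p,q$ distinct primes, $N=p+q$; $M=(m_{ik})_{i,k\in\mathbb Z/N\mathbb Z}$ has entries in $\mathbb Z/pq\mathbb Z$ and $(e^{2\pi i\,m_{ik}/pq})$ is a complex Hadamard matrix (unimodular entries, orthogonal rows). $L_i(k)=m_{ik}$, $L_{ij}=L_j-L_i$. For $d\mid pq$, $d(\mathbb Z/pq\mathbb Z)$ is the subgroup of multiples of $d$. For distinct $i,j$ there is a partition $\mathbb Z/N\mathbb Z=P_{ij}\sqcup Q_{ij}\sqcup R_{ij}$ and $r\in\mathbb Z/pq\mathbb Z$ with: $\#R_{ij}=2$ and $L_{ij}\equiv r$ on $R_{ij}$; $\#P_{ij}=p-1$ and $L_{ij}(P_{ij})=(r+q(\mathbb Z/pq\mathbb Z))\setminus\{r\}$; $\#Q_{ij}=q-1$ and $L_{ij}(Q_{ij})=(r+p(\mathbb Z/pq\mathbb Z))\setminus\{r\}$. This partition is unique ($R_{ij}$ is the pair of indices where $L_{ij}$ takes its unique repeated value). Put $P^+_{ij}=P_{ij}\cup R_{ij}$, $Q^+_{ij}=Q_{ij}\cup R_{ij}$. *)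

theory Defs
  imports Complex_Main "HOL-Number_Theory.Cong"
begin

text \<open>Indices of Z/NZ are represented by {..<N}; entries of Z/pqZ by integers,
  always compared modulo p*q.  A matrix is m :: nat => nat => int.\<close>

definition hadamard_exp :: "nat \<Rightarrow> nat \<Rightarrow> (nat \<Rightarrow> nat \<Rightarrow> int) \<Rightarrow> bool" where
  "hadamard_exp n N m \<longleftrightarrow>
     (\<forall>i<N. \<forall>i'<N. i \<noteq> i' \<longrightarrow>
        (\<Sum>k<N. cis (2 * pi * real_of_int (m i k) / real n) *
                 cnj (cis (2 * pi * real_of_int (m i' k) / real n))) = 0)"

definition Ldiff :: "(nat \<Rightarrow> nat \<Rightarrow> int) \<Rightarrow> nat \<Rightarrow> nat \<Rightarrow> nat \<Rightarrow> int" where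
  "Ldiff m i j k = m j k - m i k"

definition Rset :: "nat \<Rightarrow> nat \<Rightarrow> nat \<Rightarrow> (nat \<Rightarrow> nat \<Rightarrow> int) \<Rightarrow> nat \<Rightarrow> nat \<Rightarrow> nat set" where
  "Rset p q N m i j = {k. k < N \<and> (\<exists>k'<N. k' \<noteq> k \<and>
       [Ldiff m i j k' = Ldiff m i j k] (mod int (p * q)))}"

definition Pset :: "nat \<Rightarrow> nat \<Rightarrow> nat \<Rightarrow> (nat \<Rightarrow> nat \<Rightarrow> int) \<Rightarrow> nat \<Rightarrow> nat \<Rightarrow> nat set" where
  "Pset p q N m i j = {k. k < N \<and> k \<notin> Rset p q N m i j \<and>
       (\<exists>k'\<in>Rset p q N m i j. [Ldiff m i j k = Ldiff m i j k'] (mod int q))}"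

definition Qset :: "nat \<Rightarrow> nat \<Rightarrow> nat \<Rightarrow> (nat \<Rightarrow> nat \<Rightarrow> int) \<Rightarrow> nat \<Rightarrow> nat \<Rightarrow> nat set" where
  "Qset p q N m i j = {k. k < N \<and> k \<notin> Rset p q N m i j \<and>
       (\<exists>k'\<in>Rset p q N m i j. [Ldiff m i j k = Ldiff m i j k'] (mod int p))}"

definition Pplus where "Pplus p q N m i j = Pset p q N m i j \<union> Rset p q N m i j"
definition Qplus where "Qplus p q N m i j = Qset p q N m i j \<union> Rset p q N m i j"

end

theory Submission
  imports Defs "HOL-Computational_Algebra.Polynomial" "HOL-Computational_Algebra.Primes"
begin

text \<open>For \<open>a \<noteq> b\<close> the values \<open>x = L\<^sub>a\<^sub>b\<close> form a vanishing sum of \<open>p + q\<close> roots of unity of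
  order \<open>pq\<close>. By Dedekind's argument every Galois conjugate of such a sum vanishes too, and
  averaging over the conjugates with Ramanujan sums gives, for every residue \<open>b\<close>,
  \<open>pq\<cdot>#{x \<equiv> b (pq)} + p + q = p\<cdot>#{x \<equiv> b (p)} + q\<cdot>#{x \<equiv> b (q)}\<close>.
  Counting then shows that the values fill exactly one coset \<open>s + p\<int>\<close> and one coset
  \<open>t + q\<int>\<close> of \<open>\<int>/pq\<close>, meeting in the single repeated value; so \<open>P\<^sup>+\<close> is \<open>{x \<equiv> t (q)}\<close>
  and \<open>Q\<^sup>+\<close> is \<open>{x \<equiv> s (p)}\<close>. The sum of the values is \<open>qs\<close> mod \<open>p\<close> and \<open>pt\<close> mod \<open>q\<close>, so
  \<open>L\<^sub>i\<^sub>k = L\<^sub>i\<^sub>j + L\<^sub>j\<^sub>k\<close> makes \<open>s\<close> and \<open>t\<close> additive, and the inclusions follow by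
  comparing residues index by index.\<close>

section \<open>Integer polynomials at roots of unity\<close>

definition ipoly :: "int poly \<Rightarrow> complex \<Rightarrow> complex" where
  "ipoly A z = poly (map_poly of_int A) z"

lemma ipoly_pCons [simp]: "ipoly (pCons a A) z = of_int a + z * ipoly A z"
  by (simp add: ipoly_def map_poly_pCons)

lemma ipoly_0 [simp]: "ipoly 0 z = 0"
  by (simp add: ipoly_def)

lemma ipoly_1 [simp]: "ipoly 1 z = 1"
  by (simp add: ipoly_def)

lemma ipoly_add [simp]: "ipoly (A + B) z = ipoly A z + ipoly B z"
proof (induction A arbitrary: B)
  case (pCons a A)
  then show ?case by (cases B) (simp add: algebra_simps)
qed simp

lemma ipoly_uminus [simp]: "ipoly (- A) z = - ipoly A z"
  by (induction A) (auto simp: algebra_simps)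

lemma ipoly_diff [simp]: "ipoly (A - B) z = ipoly A z - ipoly B z"
  using ipoly_add[of A "- B" z] by simp

lemma ipoly_smult [simp]: "ipoly (smult a A) z = of_int a * ipoly A z"
  by (induction A) (auto simp: algebra_simps)

lemma ipoly_mult [simp]: "ipoly (A * B) z = ipoly A z * ipoly B z"
  by (induction A) (auto simp: algebra_simps)

lemma ipoly_monom [simp]: "ipoly (monom 1 k) z = z ^ k"
  by (simp add: ipoly_def map_poly_monom poly_monom)

lemma ipoly_sum: "ipoly (\<Sum>k\<in>S. f k) z = (\<Sum>k\<in>S. ipoly (f k) z)"
  by (induction S rule: infinite_finite_induct) auto

lemma ipoly_pcompose_monom: "ipoly (pcompose G (monom 1 l)) z = ipoly G (z ^ l)"
  by (induction G) (auto simp: pcompose_pCons)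

lemma ipoly_minimal_divisor:
  assumes "ipoly A0 z = 0" "A0 \<noteq> 0"
  obtains F where "F \<noteq> 0" "ipoly F z = 0" "\<And>A. ipoly A z = 0 \<Longrightarrow> F dvd A"
proof -
  define d where "d = (LEAST d. \<exists>F. F \<noteq> 0 \<and> ipoly F z = 0 \<and> degree F = d)"
  have "\<exists>F. F \<noteq> 0 \<and> ipoly F z = 0 \<and> degree F = d"
    unfolding d_def by (rule LeastI_ex) (use assms in blast)
  then obtain F1 where F1: "F1 \<noteq> 0" "ipoly F1 z = 0" "degree F1 = d" by blast
  define F where "F = primitive_part F1"
  have cF: "content F = 1" and F0: "F \<noteq> 0" and dF: "degree F = d"
    using F1 by (auto simp: F_def)
  have "of_int (content F1) * ipoly F z = 0"
    using F1 by (metis F_def content_times_primitive_part ipoly_smult)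
  then have evF: "ipoly F z = 0" using F1 by simp
  have "F dvd A" if A: "ipoly A z = 0" for A
  proof -
    obtain a Q where aQ: "a \<noteq> 0" "smult a A = F * Q + pseudo_mod A F"
      using pseudo_mod(1)[OF F0] by blast
    have "ipoly (pseudo_mod A F) z = 0"
      using arg_cong[OF aQ(2), of "\<lambda>B. ipoly B z"] A evF by simp
    then have "pseudo_mod A F = 0"
      using pseudo_mod(2)[OF F0, of A] Least_le[of "\<lambda>d. \<exists>F. F \<noteq> 0 \<and> ipoly F z = 0 \<and> degree F = d"]
      unfolding d_def[symmetric] dF by fastforce
    with aQ have eq: "smult a A = F * Q" by simp
    \<comment> \<open>Gauss's lemma: F is primitive, so a divides the content of Q.\<close>
    then have "content Q = normalize a * content A"
      using cF by (metis content_mult content_smult mult_1)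
    then have "[:a:] dvd Q" by (simp add: const_poly_dvd_iff_dvd_content)
    then obtain Q' where "Q = [:a:] * Q'" by (elim dvdE)
    with eq have "A = F * Q'" using aQ(1) by (simp add: mult.left_commute smult_cancel)
    then show ?thesis by simp
  qed
  with that F0 evF show ?thesis by blast
qed

lemma ipoly_monic_minimal_divisor:
  assumes "ipoly X z = 0" "lead_coeff X = 1"
  obtains F where "lead_coeff F = 1" "ipoly F z = 0" "\<And>A. ipoly A z = 0 \<Longrightarrow> F dvd A"
proof -
  have "X \<noteq> 0" using assms(2) by auto
  then obtain F0 where F0: "F0 \<noteq> 0" "ipoly F0 z = 0" "\<And>A. ipoly A z = 0 \<Longrightarrow> F0 dvd A"
    using ipoly_minimal_divisor[OF assms(1)] by blast
  obtain G0 where "X = F0 * G0" using F0(3)[OF assms(1)] by (elim dvdE)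
  then have "lead_coeff F0 * lead_coeff G0 = 1"
    using assms(2) by (simp add: lead_coeff_mult)
  then have e: "lead_coeff F0 * lead_coeff F0 = 1"
    by (auto simp: zmult_eq_1_iff)
  define F where "F = smult (lead_coeff F0) F0"
  have "F0 = smult (lead_coeff F0) F" using e by (simp add: F_def)
  then have "F dvd F0" by (metis dvd_triv_right mult_smult_left mult_1)
  moreover have "lead_coeff F = 1" "ipoly F z = 0"
    using e F0(1,2) by (simp_all add: F_def)
  ultimately show ?thesis using that F0(3) dvd_trans by metis
qed

lemma prime_dvd_power_add:
  fixes x y :: "'a::comm_ring_1"
  assumes l: "prime l"
  shows "of_nat l dvd (x + y) ^ l - x ^ l - y ^ l"
proof -
  have l1: "l > 1" using l prime_gt_1_nat by blast
  have "{..l} = insert 0 (insert l {1..l-1})" using l1 by auto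
  then have "(x + y) ^ l - x ^ l - y ^ l = (\<Sum>k\<in>{1..l-1}. of_nat (l choose k) * x ^ k * y ^ (l - k))"
    using l1 by (simp add: binomial_ring)
  also have "of_nat l dvd \<dots>"
  proof (rule dvd_sum)
    fix k assume "k \<in> {1..l-1}"
    then have "l dvd (l choose k)" using l l1 by (intro dvd_choose_prime) auto
    then obtain c where "l choose k = l * c" by (elim dvdE)
    then show "of_nat l dvd of_nat (l choose k) * x ^ k * y ^ (l - k)"
      by (simp add: mult.assoc)
  qed
  finally show ?thesis .
qed

lemma fermat_little_int:
  fixes a :: int
  assumes l: "prime l"
  shows "[a ^ l = a] (mod int l)"
proof -
  have nat_case: "[int b ^ l = int b] (mod int l)" for b :: nat
  proof (induction b)
    case 0
    then show ?case using l prime_gt_0_nat by (simp add: power_0_left)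
  next
    case (Suc b)
    have "[(int b + 1) ^ l = int b ^ l + 1] (mod int l)"
      using prime_dvd_power_add[OF l, of "int b" 1] by (simp add: cong_iff_dvd_diff diff_diff_eq)
    also have "[int b ^ l + 1 = int b + 1] (mod int l)"
      using Suc.IH by (rule cong_add) simp
    finally show ?case by (simp add: add.commute)
  qed
  have a: "[a = int (nat (a mod int l))] (mod int l)"
    using l prime_gt_0_nat by (simp add: cong_def)
  have "[a ^ l = int (nat (a mod int l)) ^ l] (mod int l)"
    using a by (rule cong_pow)
  also have "[int (nat (a mod int l)) ^ l = int (nat (a mod int l))] (mod int l)"
    by (rule nat_case)
  also have "[int (nat (a mod int l)) = a] (mod int l)"
    using a by (rule cong_sym)
  finally show ?thesis .
qed

lemma frobenius_int_poly:
  assumes l: "prime l"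
  shows "[:int l:] dvd G ^ l - pcompose G (monom 1 l)"
proof (induction G)
  case 0
  then show ?case using l prime_gt_0_nat by (simp add: power_0_left)
next
  case (pCons a G)
  have x: "pCons a G = [:a:] + monom 1 1 * G"
    by (simp add: monom_Suc)
  have "(monom 1 1 * G) ^ l = monom 1 l * G ^ l"
    by (simp add: power_mult_distrib monom_power)
  then have eq: "pCons a G ^ l - pcompose (pCons a G) (monom 1 l)
      = (([:a:] + monom 1 1 * G) ^ l - [:a:] ^ l - (monom 1 1 * G) ^ l)
        + ([:a:] ^ l - [:a:]) + monom 1 l * (G ^ l - pcompose G (monom 1 l))"
    unfolding pcompose_pCons x[symmetric] by (simp add: algebra_simps)
  have "[:int l:] dvd ([:a:] + monom 1 1 * G) ^ l - [:a:] ^ l - (monom 1 1 * G) ^ l"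
    using prime_dvd_power_add[OF l] by (metis of_nat_poly of_int_of_nat_eq)
  moreover have "[:int l:] dvd [:a:] ^ l - [:a:]"
  proof -
    obtain k where "a ^ l - a = int l * k"
      using fermat_little_int[OF l, of a] by (auto simp: cong_iff_dvd_diff elim: dvdE)
    then have "[:a:] ^ l - [:a:] = [:int l:] * [:k:]"
      by (simp add: poly_const_pow)
    then show ?thesis by simp
  qed
  ultimately show ?case
    unfolding eq using pCons.IH by (intro dvd_add dvd_mult)
qed

lemma monic_mult_cong_const_imp_dvd:
  fixes F V :: "int poly"
  assumes F: "lead_coeff F = 1" "degree F \<ge> 1" and cong: "[:d:] dvd [:c:] - F * V"
  shows "d dvd c"
proof -
  obtain U where U: "[:c:] - F * V = [:d:] * U" using cong by (elim dvdE)
  define V1 where "V1 = map_poly (\<lambda>a. a mod d) V"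
  define V2 where "V2 = map_poly (\<lambda>a. a div d) V"
  have V: "V = V1 + smult d V2"
    by (rule poly_eqI) (simp add: V1_def V2_def coeff_map_poly)
  have FV1: "F * V1 = [:c:] - smult d (U + F * V2)"
    using U unfolding V by (simp add: algebra_simps smult_add_right)
  \<comment> \<open>Otherwise the top coefficient of F*V1 would be a nonzero residue mod d.\<close>
  have "V1 = 0"
  proof (rule ccontr)
    assume nz: "V1 \<noteq> 0"
    define D where "D = degree (F * V1)"
    have D: "D \<ge> 1"
      unfolding D_def using degree_mult_eq[of F V1] nz F by fastforce
    have top: "coeff (F * V1) D = coeff V (degree V1) mod d"
      unfolding D_def using F by (simp add: lead_coeff_mult V1_def coeff_map_poly)
    have "d dvd coeff (F * V1) D"
      using D by (simp add: FV1 coeff_pCons split: nat.splits)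
    then have "lead_coeff V1 = 0"
      using top by (simp add: V1_def coeff_map_poly dvd_mod_iff dvd_imp_mod_0)
    with nz show False by simp
  qed
  then have "[:c:] = smult d (U + F * V2)" using FV1 by simp
  then have "c = d * coeff (U + F * V2) 0" by (metis coeff_pCons_0 coeff_smult)
  then show ?thesis by simp
qed

text \<open>Over \<open>\<int>/l\<close> the polynomial \<open>x\<^sup>n - 1\<close> is separable when \<open>l \<nmid> n\<close>, so a factor F cannot
  also divide \<open>G(x\<^sup>l) \<equiv> G\<^sup>l\<close>: the identity \<open>x X' - n X = n\<close> puts \<open>n\<^sup>l\<close> into the ideal \<open>(F, l)\<close>.\<close>

lemma monic_factor_frobenius_imp_dvd:
  fixes F G :: "int poly"
  assumes X: "monom 1 n - 1 = F * G" and n: "n \<ge> 1"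
    and F: "lead_coeff F = 1" "degree F \<ge> 1"
    and FG: "F dvd pcompose G (monom 1 l)" and l: "prime l"
  shows "l dvd n"
proof -
  define x :: "int poly" where "x = monom 1 1"
  define W where "W = x * pderiv F * G"
  define Y where "Y = x * pderiv G - smult (int n) G"
  have "x * pderiv (monom 1 n - 1) = smult (int n) (monom 1 n)"
    using n by (cases n) (simp_all add: x_def pderiv_diff pderiv_monom mult_monom smult_monom)
  then have "[:int n:] = x * pderiv (F * G) - smult (int n) (F * G)"
    by (simp add: X[symmetric] smult_diff_right)
  also have "\<dots> = W + F * Y"
    by (simp add: W_def Y_def pderiv_mult algebra_simps)
  finally have nW: "[:int n:] - W = F * Y" by simp
  obtain S where "[:int n:] ^ l - W ^ l = ([:int n:] - W) * S"
    using power_diff_sumr2 by blast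
  then have C: "[:int n:] ^ l - W ^ l = F * (Y * S)"
    unfolding nW by (simp add: mult.assoc)
  obtain H where H: "pcompose G (monom 1 l) = F * H" using FG by (elim dvdE)
  define T where "T = (x * pderiv F) ^ l"
  have "[:int n ^ l:] - F * (Y * S + T * H) = T * (G ^ l - pcompose G (monom 1 l))"
    using C by (simp add: W_def T_def H power_mult_distrib poly_const_pow algebra_simps)
  then have "[:int l:] dvd [:int n ^ l:] - F * (Y * S + T * H)"
    using frobenius_int_poly[OF l, of G] by simp
  then have "int l dvd int n ^ l"
    by (rule monic_mult_cong_const_imp_dvd[OF F])
  then have "l dvd n ^ l"
    by (simp flip: of_nat_power)
  then show ?thesis
    using l prime_dvd_power by blast
qed

lemma ipoly_root_of_unity_prime_power:
  assumes z: "z ^ n = 1" and n: "n \<ge> 1" and l: "prime l" "\<not> l dvd n"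
    and A: "ipoly A z = 0"
  shows "ipoly A (z ^ l) = 0"
proof -
  define X :: "int poly" where "X = monom 1 n - 1"
  have ipoly_X: "ipoly X w = w ^ n - 1" for w
    by (simp add: X_def)
  have coeff_X: "coeff X n = 1"
    using n by (simp add: X_def coeff_monom)
  have "degree X \<le> n"
    unfolding X_def by (rule degree_diff_le) (simp_all add: degree_monom_le)
  with coeff_X have lead_X: "lead_coeff X = 1"
    using le_degree[of X n] by auto
  obtain F where lead_F: "lead_coeff F = 1" and "ipoly F z = 0"
    and F_dvd: "\<And>B. ipoly B z = 0 \<Longrightarrow> F dvd B"
    using ipoly_monic_minimal_divisor[of X z] ipoly_X z lead_X by auto
  obtain G where X_FG: "X = F * G" using F_dvd[of X] ipoly_X z by (auto elim: dvdE)
  have deg_F: "degree F \<ge> 1"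
    using \<open>ipoly F z = 0\<close> lead_F by (cases "degree F") (auto elim: degree_eq_zeroE)
  show ?thesis
  proof (cases "ipoly F (z ^ l) = 0")
    case True
    then show ?thesis using F_dvd[OF A] by (auto elim: dvdE)
  next
    case False
    have "ipoly X (z ^ l) = 0"
      using z by (simp add: ipoly_X) (metis mult.commute power_mult power_one)
    with False have "ipoly (pcompose G (monom 1 l)) z = 0"
      by (simp add: X_FG ipoly_pcompose_monom)
    then have "l dvd n"
      using monic_factor_frobenius_imp_dvd[OF _ n lead_F deg_F F_dvd l(1)] X_FG
      unfolding X_def by blast
    with l(2) show ?thesis by contradiction
  qed
qed

lemma ipoly_root_of_unity_coprime_power:
  assumes z: "z ^ n = 1" and n: "n \<ge> 1" and u: "coprime u n" and A: "ipoly A z = 0"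
  shows "ipoly A (z ^ u) = 0"
  using u
proof (induction u rule: prime_divisors_induct)
  show "coprime 0 n \<Longrightarrow> ipoly A (z ^ 0) = 0"
    using z A by simp
next
  show "ipoly A (z ^ u) = 0" if "is_unit u" for u
    using that A by simp
next
  fix l u :: nat
  assume l: "prime l" and IH: "coprime u n \<Longrightarrow> ipoly A (z ^ u) = 0"
    and "coprime (l * u) n"
  then have "\<not> l dvd n" "coprime u n"
    by (auto simp: prime_imp_coprime coprime_commute dest: coprime_common_divisor_nat)
  moreover have "(z ^ u) ^ n = 1"
    using z by (metis mult.commute power_mult power_one)
  ultimately have "ipoly A ((z ^ u) ^ l) = 0"
    using ipoly_root_of_unity_prime_power[OF _ n l] IH by blast
  then show "ipoly A (z ^ (l * u)) = 0" by (metis mult.commute power_mult)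
qed

section \<open>Vanishing sums of roots of unity\<close>

definition unit_root :: "nat \<Rightarrow> int \<Rightarrow> complex" where
  "unit_root n y = cis (2 * pi * of_int y / of_nat n)"

lemma unit_root_0 [simp]: "unit_root n 0 = 1"
  by (simp add: unit_root_def)

lemma unit_root_add: "unit_root n (a + b) = unit_root n a * unit_root n b"
  by (simp add: unit_root_def cis_mult add_divide_distrib distrib_left)

lemma unit_root_power: "unit_root n y ^ m = unit_root n (int m * y)"
  by (simp add: unit_root_def DeMoivre mult_ac)

lemma unit_root_eq_1_iff:
  assumes "n > 0"
  shows "unit_root n y = 1 \<longleftrightarrow> int n dvd y"
proof
  assume "int n dvd y"
  then obtain k where "y = int n * k" by (elim dvdE)
  then have "2 * pi * of_int y / of_nat n = 2 * pi * of_int k" using assms by simp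
  then show "unit_root n y = 1" by (simp add: unit_root_def)
next
  assume "unit_root n y = 1"
  then have "cos (2 * pi * of_int y / of_nat n) = 1"
    unfolding unit_root_def by (metis cis.sel(1) one_complex.sel(1))
  then obtain k :: int where "2 * pi * of_int y / of_nat n = of_int k * 2 * pi"
    using cos_one_2pi_int by blast
  then have "real_of_int y = real_of_int (k * int n)" using assms by (simp add: field_simps)
  then show "int n dvd y" by (simp only: of_int_eq_iff) simp
qed

lemma unit_root_geometric_sum:
  assumes "m > 0" "n > 0" "int n dvd int m * y"
  shows "(\<Sum>v<m. unit_root n (int v * y)) = (if int n dvd y then of_nat m else 0)"
proof -
  have "unit_root n y ^ m = 1"
    using assms by (simp add: unit_root_power unit_root_eq_1_iff)
  then have "(\<Sum>v<m. unit_root n y ^ v) = (if unit_root n y = 1 then of_nat m else 0)"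
    using geometric_sum[of "unit_root n y" m] by auto
  then show ?thesis using unit_root_eq_1_iff[OF assms(2)] by (simp add: unit_root_power)
qed

lemma vanishing_unit_root_sum_coprime_scale:
  assumes n: "n > 0" and u: "coprime u n" and vanish: "(\<Sum>k\<in>K. unit_root n (x k)) = 0"
  shows "(\<Sum>k\<in>K. unit_root n (int u * x k)) = 0"
proof -
  define z where "z = unit_root n 1"
  define A where "A = (\<Sum>k\<in>K. monom (1::int) (nat (x k mod int n)))"
  have z_pow: "z ^ nat (x k mod int n) = unit_root n (x k)" for k
  proof -
    have "unit_root n (x k) = unit_root n (int n * (x k div int n)) * unit_root n (x k mod int n)"
      by (metis unit_root_add div_mult_mod_eq mult.commute)
    also have "unit_root n (int n * (x k div int n)) = 1"
      using unit_root_eq_1_iff[OF n] by simp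
    finally show ?thesis using n by (simp add: z_def unit_root_power)
  qed
  have ipoly_A: "ipoly A w = (\<Sum>k\<in>K. w ^ nat (x k mod int n))" for w
    by (simp add: A_def ipoly_sum)
  have "z ^ n = 1"
    using n by (simp add: z_def unit_root_power unit_root_eq_1_iff)
  moreover have "ipoly A z = 0"
    using vanish by (simp add: ipoly_A z_pow)
  ultimately have "ipoly A (z ^ u) = 0"
    using ipoly_root_of_unity_coprime_power[OF _ _ u] n by simp
  moreover have "(z ^ u) ^ nat (x k mod int n) = unit_root n (int u * x k)" for k
    by (metis z_pow power_mult mult.commute unit_root_power)
  ultimately show ?thesis by (simp add: ipoly_A)
qed

lemma unit_root_sum_multiples:
  assumes p: "p > 0" and q: "q > 0"
  shows "(\<Sum>u | u < p * q \<and> p dvd u. unit_root (p * q) (int u * y))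
    = (if int q dvd y then of_nat q else 0)"
proof -
  have "{u. u < p * q \<and> p dvd u} = (\<lambda>v. p * v) ` {..<q}"
    using p by (auto elim!: dvdE)
  moreover have "inj_on (\<lambda>v. p * v) {..<q}" using p by (auto simp: inj_on_def)
  ultimately have "(\<Sum>u | u < p * q \<and> p dvd u. unit_root (p * q) (int u * y))
      = (\<Sum>v<q. unit_root (p * q) (int v * (int p * y)))"
    by (simp add: sum.reindex mult_ac)
  also have "\<dots> = (if int (p * q) dvd int p * y then of_nat q else 0)"
    by (rule unit_root_geometric_sum) (use p q in \<open>auto simp: mult_ac\<close>)
  finally show ?thesis using p by simp
qed

lemma ramanujan_sum_two_primes:
  assumes p: "prime p" and q: "prime q" and pq: "p \<noteq> q"
  shows "(\<Sum>u | u < p * q \<and> coprime u (p * q). unit_root (p * q) (int u * y))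
    = (if int (p * q) dvd y then of_nat (p * q) else 0) - (if int q dvd y then of_nat q else 0)
      - (if int p dvd y then of_nat p else 0) + 1"
proof -
  have p0: "p > 0" and q0: "q > 0" using p q prime_gt_0_nat by auto
  define f where "f u = unit_root (p * q) (int u * y)" for u
  define Mp where "Mp = {u. u < p * q \<and> p dvd u}"
  define Mq where "Mq = {u. u < p * q \<and> q dvd u}"
  have coprime_iff: "coprime u r \<longleftrightarrow> \<not> r dvd u" if "prime r" for u r :: nat
    using that by (metis coprime_commute prime_imp_coprime coprime_absorb_right not_prime_1
        dvd_refl coprime_common_divisor_nat)
  have "coprime p q" using p q pq by (simp add: primes_coprime)
  then have "Mp \<inter> Mq = {0}"
  proof (intro set_eqI iffI)
    fix u assume "coprime p q" "u \<in> Mp \<inter> Mq"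
    then have "p * q dvd u" "u < p * q" by (auto simp: Mp_def Mq_def divides_mult)
    then show "u \<in> {0}" by (auto elim: dvdE)
  qed (use p0 q0 in \<open>auto simp: Mp_def Mq_def\<close>)
  moreover have "{u. u < p * q \<and> coprime u (p * q)} = {..<p * q} - (Mp \<union> Mq)"
    using coprime_iff[OF p] coprime_iff[OF q] by (auto simp: Mp_def Mq_def)
  moreover have "finite Mp" "finite Mq" "Mp \<union> Mq \<subseteq> {..<p * q}"
    by (auto simp: Mp_def Mq_def)
  ultimately have "sum f {u. u < p * q \<and> coprime u (p * q)}
      = sum f {..<p * q} - (sum f Mp + sum f Mq - f 0)"
    by (simp add: sum_diff sum_Un)
  moreover have "sum f {..<p * q} = (if int (p * q) dvd y then of_nat (p * q) else 0)"
    unfolding f_def by (rule unit_root_geometric_sum) (use p0 q0 in auto)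
  moreover have "sum f Mp = (if int q dvd y then of_nat q else 0)"
    unfolding f_def Mp_def by (rule unit_root_sum_multiples[OF p0 q0])
  moreover have "sum f Mq = (if int p dvd y then of_nat p else 0)"
    using unit_root_sum_multiples[OF q0 p0, of y] by (simp add: f_def Mq_def mult.commute)
  ultimately show ?thesis by (simp add: f_def)
qed

definition residue_count :: "int \<Rightarrow> (nat \<Rightarrow> int) \<Rightarrow> nat \<Rightarrow> int \<Rightarrow> nat" where
  "residue_count d x N b = card {k. k < N \<and> [x k = b] (mod d)}"

lemma sum_indicator_residue_count:
  "(\<Sum>k<N. if [x k = b] (mod d) then c else 0) = of_nat (residue_count d x N b) * c"
  by (simp add: residue_count_def sum.If_cases Collect_conj_eq lessThan_def Int_commute)

text \<open>Summing the vanishing relation, shifted by \<open>-b\<close>, over all Galois conjugates and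
  evaluating the Ramanujan sums turns it into a linear relation between residue counts.\<close>

lemma vanishing_sum_residue_counts:
  assumes p: "prime p" and q: "prime q" and pq: "p \<noteq> q"
    and vanish: "(\<Sum>k<N. unit_root (p * q) (x k)) = 0"
  shows "int (p * q) * residue_count (int (p * q)) x N b + int N
    = int p * residue_count (int p) x N b + int q * residue_count (int q) x N b"
proof -
  define n where "n = p * q"
  have n: "n > 0" using p q prime_gt_0_nat by (simp add: n_def)
  have shifted: "(\<Sum>k<N. unit_root n (int u * (x k - b))) = 0" if "coprime u n" for u
  proof -
    have "(\<Sum>k<N. unit_root n (int u * (x k - b)))
        = (\<Sum>k<N. unit_root n (int u * x k)) * unit_root n (- (int u * b))"
      by (simp add: sum_distrib_right right_diff_distrib flip: unit_root_add)
    then show ?thesis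
      using vanishing_unit_root_sum_coprime_scale[OF n that vanish[folded n_def]] by simp
  qed
  have "0 = (\<Sum>u | u < n \<and> coprime u n. \<Sum>k<N. unit_root n (int u * (x k - b)))"
    using shifted by simp
  also have "\<dots> = (\<Sum>k<N. \<Sum>u | u < n \<and> coprime u n. unit_root n (int u * (x k - b)))"
    by (rule sum.swap)
  also have "\<dots> = (\<Sum>k<N. (if int n dvd x k - b then of_nat n else 0) - (if int q dvd x k - b then of_nat q else 0)
      - (if int p dvd x k - b then of_nat p else 0) + 1)"
    by (simp only: n_def ramanujan_sum_two_primes[OF p q pq])
  also have "\<dots> = of_int (int n * residue_count (int n) x N b + int N
      - int p * residue_count (int p) x N b - int q * residue_count (int q) x N b)"
    by (simp add: sum.distrib sum_subtractf sum_indicator_residue_count flip: cong_iff_dvd_diff)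
  finally have "int n * residue_count (int n) x N b + int N
      - int p * residue_count (int p) x N b - int q * residue_count (int q) x N b = 0"
    by (metis of_int_eq_0_iff)
  then show ?thesis by (simp add: n_def)
qed

section \<open>Residue counts\<close>

lemma sum_nonneg_multiples_concentrated:
  fixes f :: "'a \<Rightarrow> int"
  assumes "finite T" and nonneg: "\<And>t. t \<in> T \<Longrightarrow> f t \<ge> 0"
    and dvd: "\<And>t. t \<in> T \<Longrightarrow> m dvd f t" and sum: "sum f T = m" and "m > 0"
  obtains t0 where "t0 \<in> T" "f t0 = m" "\<And>t. t \<in> T \<Longrightarrow> t \<noteq> t0 \<Longrightarrow> f t = 0"
proof -
  obtain t0 where t0: "t0 \<in> T" "f t0 \<noteq> 0"
    using sum \<open>m > 0\<close> by (metis less_irrefl sum.neutral)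
  then have "f t0 \<ge> m" using dvd[OF t0(1)] nonneg[OF t0(1)] by (intro zdvd_imp_le) auto
  moreover have split: "sum f T = f t0 + sum f (T - {t0})"
    using t0(1) \<open>finite T\<close> by (simp add: sum.remove)
  moreover have "sum f (T - {t0}) \<ge> 0" using nonneg by (auto intro: sum_nonneg)
  ultimately have "f t0 = m" "sum f (T - {t0}) = 0" using sum by linarith+
  then have "\<forall>t\<in>T - {t0}. f t = 0"
    using \<open>finite T\<close> nonneg by (subst (asm) sum_nonneg_eq_0_iff) auto
  with that t0(1) \<open>f t0 = m\<close> show ?thesis by blast
qed

lemma residue_count_mod: "residue_count d x N (b mod d) = residue_count d x N b"
  by (simp add: residue_count_def cong_def)

lemma residues_below_eq_singleton:
  assumes "m > 0"
  shows "{t. t < m \<and> [y = int t] (mod int m)} = {nat (y mod int m)}"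
  using assms by (auto simp: cong_def) (simp_all add: nat_less_iff)

lemma sum_weighted_residue_count:
  fixes f :: "nat \<Rightarrow> int"
  assumes "m > 0"
  shows "(\<Sum>t<m. f t * of_nat (residue_count (int m) x N (int t)))
    = (\<Sum>k<N. f (nat (x k mod int m)))"
proof -
  have "(\<Sum>t<m. f t * of_nat (residue_count (int m) x N (int t)))
      = (\<Sum>t<m. \<Sum>k<N. if [x k = int t] (mod int m) then f t else 0)"
    by (simp add: sum_indicator_residue_count ac_simps)
  also have "\<dots> = (\<Sum>k<N. \<Sum>t | t < m \<and> [x k = int t] (mod int m). f t)"
    by (subst sum.swap) (simp add: sum.If_cases lessThan_def Collect_conj_eq Int_commute)
  also have "\<dots> = (\<Sum>k<N. f (nat (x k mod int m)))"
    by (simp add: residues_below_eq_singleton[OF assms])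
  finally show ?thesis .
qed

lemma cong_int_below_iff:
  assumes "t < m" "t0 < m"
  shows "[int t = int t0] (mod int m) \<longleftrightarrow> t = t0"
  using assms by (auto simp: cong_int_iff cong_less_modulus_unique_nat)

lemma residue_count_concentrated:
  assumes m: "m > 0" and m': "m' > 1" and N: "N = m + m'"
    and cong: "\<And>b. [int (residue_count (int m) x N b) = 1] (mod int m')"
  obtains t0 where "t0 < m"
    "\<And>b. residue_count (int m) x N b = (if [b = int t0] (mod int m) then m' + 1 else 1)"
proof -
  define f where "f t = int (residue_count (int m) x N (int t)) - 1" for t
  have "(\<Sum>t<m. int (residue_count (int m) x N (int t))) = int N"
    using sum_weighted_residue_count[OF m, of "\<lambda>_. 1" x N] by simp
  then have sum: "sum f {..<m} = int m'"
    using N by (simp add: f_def sum_subtractf)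
  have dvd: "int m' dvd f t" for t
    using cong by (simp add: f_def cong_iff_dvd_diff)
  have nonneg: "f t \<ge> 0" for t
  proof (rule ccontr)
    assume "\<not> f t \<ge> 0"
    then have "f t = -1" by (simp add: f_def)
    with dvd[of t] m' show False by simp
  qed
  obtain t0 where t0: "t0 < m" "f t0 = int m'" "\<And>t. t < m \<Longrightarrow> t \<noteq> t0 \<Longrightarrow> f t = 0"
    using sum_nonneg_multiples_concentrated[of "{..<m}" f "int m'"] nonneg dvd sum m' by auto
  have "residue_count (int m) x N b = (if [b = int t0] (mod int m) then m' + 1 else 1)" for b
  proof -
    define t where "t = nat (b mod int m)"
    have t: "int t = b mod int m" "t < m"
      using m by (simp_all add: t_def nat_less_iff)
    have "residue_count (int m) x N b = residue_count (int m) x N (int t)"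
      by (simp add: t residue_count_mod)
    moreover have "[b = int t0] (mod int m) \<longleftrightarrow> t = t0"
      using cong_int_below_iff[OF t(2) t0(1)] by (simp add: t cong_def)
    ultimately show ?thesis using t0 t(2) by (auto simp: f_def)
  qed
  with t0(1) that show ?thesis by blast
qed

lemma two_times_sum_below: "2 * (\<Sum>t<m. int t) = int m * (int m - 1)"
  by (induction m) (auto simp: algebra_simps)

lemma sum_cong_concentrated_residue_count:
  assumes m: "odd m" and t0: "t0 < m"
    and count: "\<And>b. residue_count (int m) x N b = (if [b = int t0] (mod int m) then m' + 1 else 1)"
  shows "[(\<Sum>k<N. x k) = int m' * int t0] (mod int m)"
proof -
  have "m > 0" using m by (rule odd_pos)
  have "[(\<Sum>k<N. x k) = (\<Sum>k<N. int (nat (x k mod int m)))] (mod int m)"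
    using \<open>m > 0\<close> by (intro cong_sum) (simp add: cong_def)
  also have "(\<Sum>k<N. int (nat (x k mod int m)))
      = (\<Sum>t<m. int t * int (residue_count (int m) x N (int t)))"
    using sum_weighted_residue_count[OF \<open>m > 0\<close>, of int x N] by simp
  also have "\<dots> = (\<Sum>t<m. int t + (if t = t0 then int m' * int t0 else 0))"
    using cong_int_below_iff[OF _ t0] by (intro sum.cong) (auto simp: count algebra_simps)
  also have "\<dots> = (\<Sum>t<m. int t) + int m' * int t0"
    using t0 by (simp add: sum.distrib)
  also have "[\<dots> = 0 + int m' * int t0] (mod int m)"
  proof (intro cong_add cong_refl)
    have "int m dvd 2 * (\<Sum>t<m. int t)" by (simp add: two_times_sum_below)
    moreover have "coprime (int m) 2" using m by simp
    ultimately show "[(\<Sum>t<m. int t) = 0] (mod int m)"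
      by (simp add: cong_0_iff coprime_dvd_mult_right_iff)
  qed
  finally show ?thesis by simp
qed

section \<open>The partition of the index set\<close>

text \<open>The values of \<open>x\<close> lie in the cosets \<open>s + p\<int>\<close> and \<open>t + q\<int>\<close>; the congruences for the sum
  of the values determine \<open>s\<close> and \<open>t\<close>, which makes them additive in \<open>x\<close>.\<close>

definition split_residues :: "nat \<Rightarrow> nat \<Rightarrow> nat \<Rightarrow> (nat \<Rightarrow> int) \<Rightarrow> int \<Rightarrow> int \<Rightarrow> bool" where
  "split_residues p q N x s t \<longleftrightarrow>
     (\<forall>k<N. [x k = s] (mod int p) \<or> [x k = t] (mod int q)) \<and>
     [(\<Sum>k<N. x k) = int q * s] (mod int p) \<and> [(\<Sum>k<N. x k) = int p * t] (mod int q)"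

lemma split_residues_swap: "split_residues q p N x t s \<longleftrightarrow> split_residues p q N x s t"
  by (auto simp: split_residues_def)

lemma residue_count_pos:
  assumes "k < N"
  shows "residue_count d x N (x k) \<ge> 1"
proof -
  have "k \<in> {k'. k' < N \<and> [x k' = x k] (mod d)}" using assms by simp
  then have "{k'. k' < N \<and> [x k' = x k] (mod d)} \<noteq> {}" by blast
  then show ?thesis by (simp add: residue_count_def Suc_le_eq card_gt_0_iff)
qed

lemma cong_one_of_count_relation:
  fixes p q c r k :: int
  assumes "coprime p q" and "p * q * c + (p + q) = p * r + q * k"
  shows "[k = 1] (mod p)"
proof -
  have "q * (k - 1) = p * (q * c + 1 - r)"
    using assms(2) by (simp add: algebra_simps)
  then have "p dvd q * (k - 1)"
    by (metis dvd_triv_left)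
  with assms(1) show ?thesis
    by (simp add: cong_iff_dvd_diff coprime_dvd_mult_right_iff)
qed

lemma vanishing_sum_residue_structure:
  assumes p: "prime p" "odd p" and q: "prime q" "odd q" and pq: "p \<noteq> q" and N: "N = p + q"
    and vanish: "(\<Sum>k<N. unit_root (p * q) (x k)) = 0"
  obtains s t where "split_residues p q N x s t"
    "\<And>b. residue_count (int (p * q)) x N b
      = (if [b = s] (mod int p) then 1 else 0) + (if [b = t] (mod int q) then 1 else 0)"
proof -
  define c where "c b = int (residue_count (int (p * q)) x N b)" for b
  define row where "row b = int (residue_count (int p) x N b)" for b
  define col where "col b = int (residue_count (int q) x N b)" for b
  have count: "int p * int q * c b + int N = int p * row b + int q * col b" for b
    using vanishing_sum_residue_counts[OF p(1) q(1) pq vanish] by (simp add: c_def row_def col_def)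
  have coprime: "coprime (int p) (int q)" using p q pq by (simp add: primes_coprime)
  have p1: "p > 1" and q1: "q > 1" using p q prime_gt_1_nat by auto
  have "[col b = 1] (mod int p)" for b
    by (rule cong_one_of_count_relation[OF coprime]) (use count[of b] N in simp)
  then obtain t0 where t0: "t0 < q"
    "\<And>b. residue_count (int q) x N b = (if [b = int t0] (mod int q) then p + 1 else 1)"
    using residue_count_concentrated[of q p N x] p1 q1 N by (auto simp: col_def)
  have "[row b = 1] (mod int q)" for b
    by (rule cong_one_of_count_relation[of "int q" "int p" "c b" "col b"])
      (use coprime count[of b] N in \<open>simp_all add: coprime_commute algebra_simps\<close>)
  then obtain s0 where s0: "s0 < p"
    "\<And>b. residue_count (int p) x N b = (if [b = int s0] (mod int p) then q + 1 else 1)"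
    using residue_count_concentrated[of p q N x] p1 q1 N by (auto simp: row_def add.commute)
  have c: "residue_count (int (p * q)) x N b
      = (if [b = int s0] (mod int p) then 1 else 0) + (if [b = int t0] (mod int q) then 1 else 0)" for b
  proof -
    have row: "row b = (if [b = int s0] (mod int p) then int q + 1 else 1)"
      and col: "col b = (if [b = int t0] (mod int q) then int p + 1 else 1)"
      by (simp_all add: row_def col_def s0 t0)
    have "int p * int q * c b = int p * row b + int q * col b - int N"
      using count[of b] by linarith
    also have "\<dots> = int p * int q * ((if [b = int s0] (mod int p) then 1 else 0)
        + (if [b = int t0] (mod int q) then 1 else 0))"
      by (cases "[b = int s0] (mod int p)"; cases "[b = int t0] (mod int q)")
        (simp_all add: row col N algebra_simps)
    finally have "int p * int q * c b = \<dots>" .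
    then show ?thesis using p1 q1 by (auto simp: c_def split: if_splits)
  qed
  have "split_residues p q N x (int s0) (int t0)"
    unfolding split_residues_def
  proof (intro conjI allI impI)
    show "[x k = int s0] (mod int p) \<or> [x k = int t0] (mod int q)" if "k < N" for k
      using residue_count_pos[OF that, of "int (p * q)" x] c[of "x k"] by (auto split: if_splits)
    show "[(\<Sum>k<N. x k) = int q * int s0] (mod int p)"
      using sum_cong_concentrated_residue_count[OF p(2) s0] .
    show "[(\<Sum>k<N. x k) = int p * int t0] (mod int q)"
      using sum_cong_concentrated_residue_count[OF q(2) t0] .
  qed
  with c that show ?thesis by blast
qed

lemma residue_count_ge_2_iff:
  assumes "k < N"
  shows "residue_count d x N (x k) \<ge> 2 \<longleftrightarrow> (\<exists>k'<N. k' \<noteq> k \<and> [x k' = x k] (mod d))"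
proof -
  define S where "S = {k'. k' < N \<and> [x k' = x k] (mod d)}"
  have "finite S" "k \<in> S" using assms by (simp_all add: S_def)
  then have "card S \<ge> 2 \<longleftrightarrow> (\<exists>k'\<in>S. k' \<noteq> k)"
    using card_le_Suc0_iff_eq[of S] by (auto simp: not_le numeral_2_eq_2 Suc_le_eq) metis
  then show ?thesis by (auto simp: residue_count_def S_def)
qed

lemma hadamard_exp_vanishing_sum:
  assumes "hadamard_exp n N m" "a < N" "b < N" "a \<noteq> b"
  shows "(\<Sum>k<N. unit_root n (Ldiff m a b k)) = 0"
proof -
  have "cis (2 * pi * of_int (m b k) / of_nat n) * cnj (cis (2 * pi * of_int (m a k) / of_nat n))
      = unit_root n (Ldiff m a b k)" for k
    by (simp add: unit_root_def Ldiff_def cis_cnj cis_mult diff_divide_distrib algebra_simps)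
  then have "(\<Sum>k<N. unit_root n (Ldiff m a b k))
      = (\<Sum>k<N. cis (2 * pi * of_int (m b k) / of_nat n) * cnj (cis (2 * pi * of_int (m a k) / of_nat n)))"
    by simp
  also have "\<dots> = 0"
    using assms unfolding hadamard_exp_def by auto
  finally show ?thesis .
qed

lemma residue_count_two_cosets_meet:
  assumes coprime: "coprime (int p) (int q)"
    and count: "\<And>b. residue_count (int (p * q)) x N b
      = (if [b = s] (mod int p) then 1 else 0) + (if [b = t] (mod int q) then 1 else 0)"
  obtains k where "k < N" "[x k = s] (mod int p)" "[x k = t] (mod int q)"
proof -
  obtain y where y: "[y = s] (mod int p)" "[y = t] (mod int q)"
    using binary_chinese_remainder_int[OF coprime] by blast
  then have "residue_count (int (p * q)) x N y \<noteq> 0" by (simp only: count) simp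
  then obtain k where k: "k < N" "[x k = y] (mod int (p * q))"
    by (auto simp: residue_count_def card_eq_0_iff)
  then have "[x k = y] (mod int p)" "[x k = y] (mod int q)"
    using cong_dvd_modulus[OF k(2)] by simp_all
  with k(1) y that show ?thesis by (meson cong_trans)
qed

lemma Pset_Pplus_residues:
  assumes p: "prime p" "odd p" and q: "prime q" "odd q" and pq: "p \<noteq> q" and N: "N = p + q"
    and H: "hadamard_exp (p * q) N m" and ab: "a < N" "b < N" "a \<noteq> b"
  obtains s t where "split_residues p q N (Ldiff m a b) s t"
    "Pset p q N m a b = {c. c < N \<and> [Ldiff m a b c = t] (mod int q) \<and> \<not> [Ldiff m a b c = s] (mod int p)}"
    "Pplus p q N m a b = {c. c < N \<and> [Ldiff m a b c = t] (mod int q)}"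
proof -
  define x where "x = Ldiff m a b"
  obtain s t where split: "split_residues p q N x s t" and count:
    "\<And>b. residue_count (int (p * q)) x N b
      = (if [b = s] (mod int p) then 1 else 0) + (if [b = t] (mod int q) then 1 else 0)"
    using vanishing_sum_residue_structure[OF p q pq N hadamard_exp_vanishing_sum[OF H ab]]
    unfolding x_def by blast
  have R: "Rset p q N m a b = {c. c < N \<and> [x c = s] (mod int p) \<and> [x c = t] (mod int q)}"
  proof -
    have "c \<in> Rset p q N m a b \<longleftrightarrow> c < N \<and> residue_count (int (p * q)) x N (x c) \<ge> 2" for c
      using residue_count_ge_2_iff[of c N "int (p * q)" x] by (auto simp: Rset_def x_def)
    moreover have "residue_count (int (p * q)) x N (x c) \<ge> 2
        \<longleftrightarrow> [x c = s] (mod int p) \<and> [x c = t] (mod int q)" for c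
      by (simp only: count) simp
    ultimately show ?thesis by blast
  qed
  obtain k0 where "k0 < N" "[x k0 = s] (mod int p)" "[x k0 = t] (mod int q)"
    using residue_count_two_cosets_meet[OF _ count] p q pq by (auto simp: primes_coprime)
  then have k0: "k0 \<in> Rset p q N m a b" "[x k0 = t] (mod int q)"
    by (simp_all add: R)
  have "(\<exists>k'\<in>Rset p q N m a b. [x c = x k'] (mod int q)) \<longleftrightarrow> [x c = t] (mod int q)" for c
  proof
    assume "\<exists>k'\<in>Rset p q N m a b. [x c = x k'] (mod int q)"
    then show "[x c = t] (mod int q)" by (auto simp: R elim: cong_trans)
  next
    assume "[x c = t] (mod int q)"
    then have "[x c = x k0] (mod int q)" using k0(2) by (metis cong_sym cong_trans)
    with k0(1) show "\<exists>k'\<in>Rset p q N m a b. [x c = x k'] (mod int q)" by blast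
  qed
  then have P: "Pset p q N m a b = {c. c < N \<and> [x c = t] (mod int q) \<and> \<not> [x c = s] (mod int p)}"
    unfolding Pset_def x_def[symmetric] by (auto simp: R)
  then have "Pplus p q N m a b = {c. c < N \<and> [x c = t] (mod int q)}"
    by (auto simp: Pplus_def R)
  with split P that show ?thesis by (simp add: x_def)
qed

lemma split_residues_add_cong:
  assumes coprime: "coprime (int p) (int q)"
    and x: "split_residues p q N x s1 t1" and y: "split_residues p q N y s2 t2"
    and xy: "split_residues p q N (\<lambda>k. x k + y k) s3 t3"
  shows "[s3 = s1 + s2] (mod int p)"
proof -
  have "[int q * s3 = (\<Sum>k<N. x k + y k)] (mod int p)"
    using xy by (simp add: split_residues_def cong_sym)
  also have "(\<Sum>k<N. x k + y k) = (\<Sum>k<N. x k) + (\<Sum>k<N. y k)"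
    by (rule sum.distrib)
  also have "[\<dots> = int q * s1 + int q * s2] (mod int p)"
    using x y by (intro cong_add) (simp_all add: split_residues_def)
  finally have "[int q * s3 = int q * (s1 + s2)] (mod int p)"
    by (simp add: distrib_left)
  then show ?thesis
    using coprime by (simp add: cong_mult_lcancel coprime_commute)
qed

lemma split_residues_add:
  assumes coprime: "coprime (int p) (int q)"
    and x: "split_residues p q N x s1 t1" and y: "split_residues p q N y s2 t2"
    and xy: "split_residues p q N (\<lambda>k. x k + y k) s3 t3"
    and c: "c < N" "[x c = t1] (mod int q)" "\<not> [x c = s1] (mod int p)"
  shows "[y c = t2] (mod int q)"
proof (rule ccontr)
  assume yc: "\<not> [y c = t2] (mod int q)"
  have s3: "[s3 = s1 + s2] (mod int p)"
    using split_residues_add_cong[OF coprime x y xy] .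
  have t3: "[t3 = t1 + t2] (mod int q)"
    using split_residues_add_cong[of q p N x t1 s1 y t2 s2 t3 s3] coprime x y xy
    by (simp add: split_residues_swap coprime_commute)
  have "\<not> [x c + y c = t3] (mod int q)"
  proof
    assume "[x c + y c = t3] (mod int q)"
    then have "[t1 + y c = t1 + t2] (mod int q)"
      using c(2) t3 by (metis cong_add_rcancel cong_sym cong_trans)
    with yc show False by (simp add: cong_add_lcancel)
  qed
  then have "[x c + y c = s3] (mod int p)"
    using xy c(1) by (auto simp: split_residues_def)
  moreover have "[y c = s2] (mod int p)"
    using y c(1) yc by (auto simp: split_residues_def)
  ultimately have "[x c + s2 = s1 + s2] (mod int p)"
    using s3 by (metis cong_add_lcancel cong_sym cong_trans)
  with c(3) show False by (simp add: cong_add_rcancel)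
qed

lemma Pset_subset_Pplus:
  assumes p: "prime p" "odd p" and q: "prime q" "odd q" and pq: "p \<noteq> q" and N: "N = p + q"
    and H: "hadamard_exp (p * q) N m"
    and ijk: "i < N" "j < N" "k < N" "i \<noteq> j" "j \<noteq> k" "i \<noteq> k"
  shows "Pset p q N m i j \<subseteq> Pplus p q N m j k"
proof
  fix c assume c: "c \<in> Pset p q N m i j"
  obtain s1 t1 where ij: "split_residues p q N (Ldiff m i j) s1 t1"
    "Pset p q N m i j = {c. c < N \<and> [Ldiff m i j c = t1] (mod int q) \<and> \<not> [Ldiff m i j c = s1] (mod int p)}"
    "Pplus p q N m i j = {c. c < N \<and> [Ldiff m i j c = t1] (mod int q)}"
    by (rule Pset_Pplus_residues[OF p q pq N H ijk(1,2,4)])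
  obtain s2 t2 where jk: "split_residues p q N (Ldiff m j k) s2 t2"
    "Pset p q N m j k = {c. c < N \<and> [Ldiff m j k c = t2] (mod int q) \<and> \<not> [Ldiff m j k c = s2] (mod int p)}"
    "Pplus p q N m j k = {c. c < N \<and> [Ldiff m j k c = t2] (mod int q)}"
    by (rule Pset_Pplus_residues[OF p q pq N H ijk(2,3,5)])
  obtain s3 t3 where ik: "split_residues p q N (Ldiff m i k) s3 t3"
    "Pset p q N m i k = {c. c < N \<and> [Ldiff m i k c = t3] (mod int q) \<and> \<not> [Ldiff m i k c = s3] (mod int p)}"
    "Pplus p q N m i k = {c. c < N \<and> [Ldiff m i k c = t3] (mod int q)}"
    by (rule Pset_Pplus_residues[OF p q pq N H ijk(1,3,6)])
  have "Ldiff m i k = (\<lambda>c. Ldiff m i j c + Ldiff m j k c)"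
    by (simp add: Ldiff_def fun_eq_iff)
  with ik(1) have ik': "split_residues p q N (\<lambda>c. Ldiff m i j c + Ldiff m j k c) s3 t3"
    by simp
  have "coprime (int p) (int q)"
    using p q pq by (simp add: primes_coprime)
  moreover have "c < N" "[Ldiff m i j c = t1] (mod int q)" "\<not> [Ldiff m i j c = s1] (mod int p)"
    using c ij(2) by simp_all
  ultimately have "[Ldiff m j k c = t2] (mod int q)"
    by (rule split_residues_add[OF _ ij(1) jk(1) ik'])
  with \<open>c < N\<close> jk(3) show "c \<in> Pplus p q N m j k" by simp
qed

lemma Qset_eq_Pset_swap: "Qset p q N m i j = Pset q p N m i j"
  by (simp add: Qset_def Pset_def Rset_def mult.commute)

lemma Qplus_eq_Pplus_swap: "Qplus p q N m i j = Pplus q p N m i j"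
  by (simp add: Qplus_def Pplus_def Qset_eq_Pset_swap Rset_def mult.commute)

theorem corollary6p7:
  fixes p q N :: nat and m :: "nat \<Rightarrow> nat \<Rightarrow> int"
  assumes "prime p" "prime q" "p \<noteq> q" "p \<ge> 5" "q \<ge> 5"
    and "N = p + q"
    and "hadamard_exp (p * q) N m"
    and "i < N" "j < N" "k < N" "i \<noteq> j" "j \<noteq> k" "i \<noteq> k"
  shows "Pset p q N m i j \<subseteq> Pplus p q N m j k \<and> Qset p q N m i j \<subseteq> Qplus p q N m j k"
proof
  have "odd p" "odd q"
    using assms(1-5) by (auto simp: prime_odd_nat)
  then show "Pset p q N m i j \<subseteq> Pplus p q N m j k"
    using Pset_subset_Pplus[OF assms(1) _ assms(2) _ assms(3,6,7) assms(8-13)] by blast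
  have "Pset q p N m i j \<subseteq> Pplus q p N m j k"
    using \<open>odd p\<close> \<open>odd q\<close> assms(3,6,7) Pset_subset_Pplus[OF assms(2) _ assms(1) _ _ _ _ assms(8-13)]
    by (simp add: add.commute mult.commute)
  then show "Qset p q N m i j \<subseteq> Qplus p q N m j k"
    by (simp add: Qset_eq_Pset_swap Qplus_eq_Pplus_swap)
qed

end
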